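(* The category $\mathsf{Stone}^{\mathsf{R}}$ is equivalent to the category $\mathsf{BA}^\mathsf{S}$. The equivalence is given by the functor $\mathsf{Clop}\colon\mathsf{Stone}^{\mathsf{R}}\to\mathsf{BA}^\mathsf{S}$ sending a Stone space $X$ to the boolean algebra $\mathsf{Clop}(X)$ of its clopen subsets and a closed relation $R\colon X\to Y$ to the subordination $S_R\colon\mathsf{Clop}(X)\to\mathsf{Clop}(Y)$ with $U\mathrel{S_R}V\iff R[U]\subseteq V$, and the functor $\mathsf{Ult}\colon\mathsf{BA}^\mathsf{S}\to\mathsf{Stone}^{\mathsf{R}}$ sending a boolean algebra $A$ to its Stone space $\mathsf{Ult}(A)$ of ultrafilters and a subordination $S\colon A\to B$ to the closed relation $R_S\colon\mathsf{Ult}(A)\to\mathsf{Ult}(B)$ with $x\mathrel{R_S}y\iff S[x]\subseteq y$.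
   Context: A Stone space is a zero-dimensional compact Hausdorff space. A relation $R\subseteq X\times Y$ between topological spaces is closed if it is a closed subset of $X\times Y$. For $F\subseteq X$, $R[F]=\{y\mid \exists x\in F,\ x\mathrel{R}y\}$. $\mathsf{Stone}^{\mathsf{R}}$ is the category of Stone spaces and closed relations, with identity relations as identities and relational composition. A subordination relation from a boolean algebra $A$ to a boolean algebra $B$ is a relation $S\subseteq A\times B$ such that for $a,b\in A$, $c,d\in B$: (S1) $0\mathrel{S}0$ and $1\mathrel{S}1$; (S2) $a\mathrel{S}c$ and $b\mathrel{S}c$ imply $(a\vee b)\mathrel{S}c$; (S3) $a\mathrel{S}c$ and $a\mathrel{S}d$ imply $a\mathrel{S}(c\wedge d)$; (S4) $a\le b$, $b\mathrel{S}c$, $c\le d$ imply $a\mathrel{S}d$. $\mathsf{BA}^\mathsf{S}$ is the category of boolean algebras and subordination relations; the identity on $A$ is $\le_A$ and composition is relational composition ($a\mathrel{(S_2\circ S_1)}c$ iff $\exists b$ with $a\mathrel{S_1}b\mathrel{S_2}c$). $S[x]=\{b\mid\exists a\in x,\ a\mathrel{S}b\}$. *)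

theory Defs
  imports "HOL-Analysis.Analysis"
begin

definition stone_space :: "'x topology \<Rightarrow> bool" where
  "stone_space X \<longleftrightarrow> compact_space X \<and> Hausdorff_space X \<and> X dim_le 0"

text \<open>Morphisms X \<rightarrow> Y in Stone^R: closed relations R \<subseteq> X \<times> Y.\<close>
definition closed_rel :: "'x topology \<Rightarrow> 'y topology \<Rightarrow> ('x \<times> 'y) set \<Rightarrow> bool" where
  "closed_rel X Y R \<longleftrightarrow> R \<subseteq> topspace X \<times> topspace Y \<and> closedin (prod_topology X Y) R"

text \<open>Identity of Stone^R; composition is relational composition R O R' (first R, then R').\<close>
definition stone_id :: "'x topology \<Rightarrow> ('x \<times> 'x) set" where
  "stone_id X = Id_on (topspace X)"

definition stone_iso :: "'x topology \<Rightarrow> 'y topology \<Rightarrow> ('x \<times> 'y) set \<Rightarrow> bool" where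
  "stone_iso X Y R \<longleftrightarrow> closed_rel X Y R \<and>
     (\<exists>R'. closed_rel Y X R' \<and> R O R' = stone_id X \<and> R' O R = stone_id Y)"

record 'a ba =
  carrier :: "'a set"
  join :: "'a \<Rightarrow> 'a \<Rightarrow> 'a"
  meet :: "'a \<Rightarrow> 'a \<Rightarrow> 'a"
  neg :: "'a \<Rightarrow> 'a"
  zero :: 'a
  one :: 'a

definition is_ba :: "'a ba \<Rightarrow> bool" where
  "is_ba A \<longleftrightarrow>
     zero A \<in> carrier A \<and> one A \<in> carrier A \<and>
     (\<forall>a\<in>carrier A. neg A a \<in> carrier A) \<and>
     (\<forall>a\<in>carrier A. \<forall>b\<in>carrier A. join A a b \<in> carrier A \<and> meet A a b \<in> carrier A) \<and>
     (\<forall>a\<in>carrier A. \<forall>b\<in>carrier A.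
        join A a b = join A b a \<and> meet A a b = meet A b a \<and>
        join A a (meet A a b) = a \<and> meet A a (join A a b) = a) \<and>
     (\<forall>a\<in>carrier A. \<forall>b\<in>carrier A. \<forall>c\<in>carrier A.
        join A a (join A b c) = join A (join A a b) c \<and>
        meet A a (meet A b c) = meet A (meet A a b) c \<and>
        meet A a (join A b c) = join A (meet A a b) (meet A a c)) \<and>
     (\<forall>a\<in>carrier A. join A a (neg A a) = one A \<and> meet A a (neg A a) = zero A)"

definition ba_le :: "'a ba \<Rightarrow> 'a \<Rightarrow> 'a \<Rightarrow> bool" where
  "ba_le A a b \<longleftrightarrow> meet A a b = a"

text \<open>Morphisms A \<rightarrow> B in BA^S: subordination relations, axioms (S1)-(S4).\<close>
definition subordination :: "'a ba \<Rightarrow> 'b ba \<Rightarrow> ('a \<times> 'b) set \<Rightarrow> bool" where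
  "subordination A B S \<longleftrightarrow>
     S \<subseteq> carrier A \<times> carrier B \<and>
     (zero A, zero B) \<in> S \<and> (one A, one B) \<in> S \<and>
     (\<forall>a\<in>carrier A. \<forall>b\<in>carrier A. \<forall>c\<in>carrier B.
        (a, c) \<in> S \<longrightarrow> (b, c) \<in> S \<longrightarrow> (join A a b, c) \<in> S) \<and>
     (\<forall>a\<in>carrier A. \<forall>c\<in>carrier B. \<forall>d\<in>carrier B.
        (a, c) \<in> S \<longrightarrow> (a, d) \<in> S \<longrightarrow> (a, meet B c d) \<in> S) \<and>
     (\<forall>a\<in>carrier A. \<forall>b\<in>carrier A. \<forall>c\<in>carrier B. \<forall>d\<in>carrier B.
        ba_le A a b \<longrightarrow> (b, c) \<in> S \<longrightarrow> ba_le B c d \<longrightarrow> (a, d) \<in> S)"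

text \<open>Identity of BA^S is the order of A; composition is relational composition S O S'.\<close>
definition ba_id :: "'a ba \<Rightarrow> ('a \<times> 'a) set" where
  "ba_id A = {(a, b). a \<in> carrier A \<and> b \<in> carrier A \<and> ba_le A a b}"

definition subord_iso :: "'a ba \<Rightarrow> 'b ba \<Rightarrow> ('a \<times> 'b) set \<Rightarrow> bool" where
  "subord_iso A B S \<longleftrightarrow> subordination A B S \<and>
     (\<exists>S'. subordination B A S' \<and> S O S' = ba_id A \<and> S' O S = ba_id B)"

definition Clop :: "'x topology \<Rightarrow> 'x set ba" where
  "Clop X = \<lparr> carrier = {U. closedin X U \<and> openin X U},
              join = (\<union>), meet = (\<inter>), neg = (\<lambda>U. topspace X - U),
              zero = {}, one = topspace X \<rparr>"

definition Clop_rel :: "'x topology \<Rightarrow> 'y topology \<Rightarrow> ('x \<times> 'y) set \<Rightarrow> ('x set \<times> 'y set) set" where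
  "Clop_rel X Y R = {(U, V). U \<in> carrier (Clop X) \<and> V \<in> carrier (Clop Y) \<and> R `` U \<subseteq> V}"

definition ultrafilter_of :: "'a ba \<Rightarrow> 'a set \<Rightarrow> bool" where
  "ultrafilter_of A x \<longleftrightarrow>
     x \<subseteq> carrier A \<and> one A \<in> x \<and> zero A \<notin> x \<and>
     (\<forall>a\<in>x. \<forall>b\<in>x. meet A a b \<in> x) \<and>
     (\<forall>a\<in>x. \<forall>b\<in>carrier A. ba_le A a b \<longrightarrow> b \<in> x) \<and>
     (\<forall>a\<in>carrier A. a \<in> x \<or> neg A a \<in> x)"

definition stone_map :: "'a ba \<Rightarrow> 'a \<Rightarrow> 'a set set" where
  "stone_map A a = {x. ultrafilter_of A x \<and> a \<in> x}"

definition Ult :: "'a ba \<Rightarrow> 'a set topology" where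
  "Ult A = topology_generated_by (stone_map A ` carrier A)"

definition Ult_rel :: "'a ba \<Rightarrow> 'b ba \<Rightarrow> ('a \<times> 'b) set \<Rightarrow> ('a set \<times> 'b set) set" where
  "Ult_rel A B S = {(x, y). ultrafilter_of A x \<and> ultrafilter_of B y \<and> S `` x \<subseteq> y}"

definition eta_rel :: "'x topology \<Rightarrow> ('x \<times> 'x set set) set" where
  "eta_rel X = {(p, {U \<in> carrier (Clop X). p \<in> U}) | p. p \<in> topspace X}"

definition eps_rel :: "'a ba \<Rightarrow> ('a \<times> 'a set set) set" where
  "eps_rel A = {(a, U). a \<in> carrier A \<and> U \<in> carrier (Clop (Ult A)) \<and> stone_map A a \<subseteq> U}"

end

theory Submission
  imports Defs
begin

text \<open>
  Clop and Ult are Stone duality extended from functions to relations, and everything rests on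
  two separation principles. In a Stone space, compactness and zero-dimensionality put a clopen
  set between a closed set and any open superset. In a Boolean algebra, the prime ideal theorem
  extends a filter to an ultrafilter avoiding any disjoint ideal. These provide the intermediate
  points needed for preservation of composition and for naturality. The units are the map sending
  a point to its clopen neighbourhoods, a homeomorphism onto Ult (Clop X), and the Stone map, a
  Boolean isomorphism onto Clop (Ult A), both regarded as relations.
\<close>

section \<open>Filters, ideals and ultrafilters\<close>

definition ba_filter :: "'a ba \<Rightarrow> 'a set \<Rightarrow> bool" where
  "ba_filter A F \<longleftrightarrow> F \<subseteq> carrier A \<and> F \<noteq> {} \<and>
     (\<forall>a\<in>F. \<forall>b\<in>F. meet A a b \<in> F) \<and> (\<forall>a\<in>F. \<forall>b\<in>carrier A. ba_le A a b \<longrightarrow> b \<in> F)"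

definition ba_ideal :: "'a ba \<Rightarrow> 'a set \<Rightarrow> bool" where
  "ba_ideal A J \<longleftrightarrow> J \<subseteq> carrier A \<and> zero A \<in> J \<and>
     (\<forall>a\<in>J. \<forall>b\<in>J. join A a b \<in> J) \<and> (\<forall>a\<in>J. \<forall>b\<in>carrier A. ba_le A b a \<longrightarrow> b \<in> J)"

definition principal_filter :: "'a ba \<Rightarrow> 'a \<Rightarrow> 'a set" where
  "principal_filter A a = {b \<in> carrier A. ba_le A a b}"

definition principal_ideal :: "'a ba \<Rightarrow> 'a \<Rightarrow> 'a set" where
  "principal_ideal A a = {b \<in> carrier A. ba_le A b a}"

inductive_set ideal_generated :: "'a ba \<Rightarrow> 'a set \<Rightarrow> 'a set" for A :: "'a ba" and G :: "'a set" where
  gen_zero: "zero A \<in> ideal_generated A G"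
| gen_base: "a \<in> G \<Longrightarrow> a \<in> ideal_generated A G"
| gen_join: "a \<in> ideal_generated A G \<Longrightarrow> b \<in> ideal_generated A G \<Longrightarrow> join A a b \<in> ideal_generated A G"
| gen_down: "a \<in> ideal_generated A G \<Longrightarrow> b \<in> carrier A \<Longrightarrow> ba_le A b a \<Longrightarrow> b \<in> ideal_generated A G"

lemma ba_filter_Union_chain:
  assumes "\<C> \<noteq> {}" and filters: "\<And>M. M \<in> \<C> \<Longrightarrow> ba_filter A M"
    and chain: "\<And>M N. M \<in> \<C> \<Longrightarrow> N \<in> \<C> \<Longrightarrow> M \<subseteq> N \<or> N \<subseteq> M"
  shows "ba_filter A (\<Union>\<C>)"
  unfolding ba_filter_def
proof (intro conjI ballI impI)
  fix a b assume "a \<in> \<Union>\<C>" "b \<in> \<Union>\<C>"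
  then obtain M N where MN: "M \<in> \<C>" "N \<in> \<C>" "a \<in> M" "b \<in> N" by blast
  then have "a \<in> M \<union> N" "b \<in> M \<union> N" "M \<union> N \<in> \<C>"
    using chain[of M N] by (auto simp: sup_absorb1 sup_absorb2)
  then show "meet A a b \<in> \<Union>\<C>" using filters[of "M \<union> N"] unfolding ba_filter_def by blast
next
  show "\<Union>\<C> \<subseteq> carrier A" "\<Union>\<C> \<noteq> {}"
    using assms(1) filters unfolding ba_filter_def by blast+
next
  fix a b assume "a \<in> \<Union>\<C>" "b \<in> carrier A" "ba_le A a b"
  then show "b \<in> \<Union>\<C>" using filters unfolding ba_filter_def by blast
qed

locale bool_alg =
  fixes A :: "'a ba"
  assumes is_ba: "is_ba A"
begin

lemma zero_closed [simp]: "zero A \<in> carrier A"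
  and one_closed [simp]: "one A \<in> carrier A"
  and neg_closed [simp]: "a \<in> carrier A \<Longrightarrow> neg A a \<in> carrier A"
  and join_closed [simp]: "a \<in> carrier A \<Longrightarrow> b \<in> carrier A \<Longrightarrow> join A a b \<in> carrier A"
  and meet_closed [simp]: "a \<in> carrier A \<Longrightarrow> b \<in> carrier A \<Longrightarrow> meet A a b \<in> carrier A"
  using is_ba unfolding is_ba_def by blast+

lemma join_commute: "a \<in> carrier A \<Longrightarrow> b \<in> carrier A \<Longrightarrow> join A a b = join A b a"
  and meet_commute: "a \<in> carrier A \<Longrightarrow> b \<in> carrier A \<Longrightarrow> meet A a b = meet A b a"
  and join_meet_absorb: "a \<in> carrier A \<Longrightarrow> b \<in> carrier A \<Longrightarrow> join A a (meet A a b) = a"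
  and meet_join_absorb: "a \<in> carrier A \<Longrightarrow> b \<in> carrier A \<Longrightarrow> meet A a (join A a b) = a"
  and meet_join_distrib: "a \<in> carrier A \<Longrightarrow> b \<in> carrier A \<Longrightarrow> c \<in> carrier A \<Longrightarrow>
         meet A a (join A b c) = join A (meet A a b) (meet A a c)"
  and join_neg: "a \<in> carrier A \<Longrightarrow> join A a (neg A a) = one A"
  and meet_neg: "a \<in> carrier A \<Longrightarrow> meet A a (neg A a) = zero A"
proof -
  have "\<forall>a\<in>carrier A. \<forall>b\<in>carrier A. join A a b = join A b a \<and> meet A a b = meet A b a \<and>
          join A a (meet A a b) = a \<and> meet A a (join A a b) = a"
    and "\<forall>a\<in>carrier A. \<forall>b\<in>carrier A. \<forall>c\<in>carrier A.
          meet A a (join A b c) = join A (meet A a b) (meet A a c)"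
    and "\<forall>a\<in>carrier A. join A a (neg A a) = one A \<and> meet A a (neg A a) = zero A"
    using is_ba unfolding is_ba_def by blast+
  then show "a \<in> carrier A \<Longrightarrow> b \<in> carrier A \<Longrightarrow> join A a b = join A b a"
    and "a \<in> carrier A \<Longrightarrow> b \<in> carrier A \<Longrightarrow> meet A a b = meet A b a"
    and "a \<in> carrier A \<Longrightarrow> b \<in> carrier A \<Longrightarrow> join A a (meet A a b) = a"
    and "a \<in> carrier A \<Longrightarrow> b \<in> carrier A \<Longrightarrow> meet A a (join A a b) = a"
    and "a \<in> carrier A \<Longrightarrow> b \<in> carrier A \<Longrightarrow> c \<in> carrier A \<Longrightarrow>
         meet A a (join A b c) = join A (meet A a b) (meet A a c)"
    and "a \<in> carrier A \<Longrightarrow> join A a (neg A a) = one A"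
    and "a \<in> carrier A \<Longrightarrow> meet A a (neg A a) = zero A"
    by blast+
qed

lemma join_assoc: "a \<in> carrier A \<Longrightarrow> b \<in> carrier A \<Longrightarrow> c \<in> carrier A \<Longrightarrow>
         join A (join A a b) c = join A a (join A b c)"
  and meet_assoc: "a \<in> carrier A \<Longrightarrow> b \<in> carrier A \<Longrightarrow> c \<in> carrier A \<Longrightarrow>
         meet A (meet A a b) c = meet A a (meet A b c)"
proof -
  have "\<forall>a\<in>carrier A. \<forall>b\<in>carrier A. \<forall>c\<in>carrier A.
          join A a (join A b c) = join A (join A a b) c \<and>
          meet A a (meet A b c) = meet A (meet A a b) c"
    using is_ba unfolding is_ba_def by blast
  then show "a \<in> carrier A \<Longrightarrow> b \<in> carrier A \<Longrightarrow> c \<in> carrier A \<Longrightarrow>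
      join A (join A a b) c = join A a (join A b c)"
    and "a \<in> carrier A \<Longrightarrow> b \<in> carrier A \<Longrightarrow> c \<in> carrier A \<Longrightarrow>
      meet A (meet A a b) c = meet A a (meet A b c)" by simp_all
qed

lemma meet_idem [simp]: "a \<in> carrier A \<Longrightarrow> meet A a a = a"
  using meet_join_absorb[of a "meet A a a"] by (simp add: join_meet_absorb)

lemma join_idem [simp]: "a \<in> carrier A \<Longrightarrow> join A a a = a"
  using join_meet_absorb[of a "join A a a"] by (simp add: meet_join_absorb)

lemma meet_zero [simp]: "a \<in> carrier A \<Longrightarrow> meet A a (zero A) = zero A"
  using meet_assoc[of a a "neg A a"] by (simp add: meet_neg)

lemma meet_one [simp]: "a \<in> carrier A \<Longrightarrow> meet A a (one A) = a"
  using meet_join_absorb[of a "neg A a"] by (simp add: join_neg)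

lemma le_refl [simp]: "a \<in> carrier A \<Longrightarrow> ba_le A a a"
  by (simp add: ba_le_def)

lemma le_trans:
  "a \<in> carrier A \<Longrightarrow> b \<in> carrier A \<Longrightarrow> c \<in> carrier A \<Longrightarrow> ba_le A a b \<Longrightarrow> ba_le A b c \<Longrightarrow> ba_le A a c"
  unfolding ba_le_def using meet_assoc[of a b c] by simp

lemma le_iff_join: "a \<in> carrier A \<Longrightarrow> b \<in> carrier A \<Longrightarrow> ba_le A a b \<longleftrightarrow> join A a b = b"
  unfolding ba_le_def
  using join_meet_absorb[of b a] meet_join_absorb[of a b]
  by (auto simp: join_commute[of a] meet_commute[of a b])

lemma meet_le1 [simp]: "a \<in> carrier A \<Longrightarrow> b \<in> carrier A \<Longrightarrow> ba_le A (meet A a b) a"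
  and meet_le2 [simp]: "a \<in> carrier A \<Longrightarrow> b \<in> carrier A \<Longrightarrow> ba_le A (meet A a b) b"
  unfolding ba_le_def
  by (simp_all add: meet_commute[of "meet A a b" a] meet_assoc[symmetric]) (simp add: meet_assoc)

lemma join_le1 [simp]: "a \<in> carrier A \<Longrightarrow> b \<in> carrier A \<Longrightarrow> ba_le A a (join A a b)"
  and join_le2 [simp]: "a \<in> carrier A \<Longrightarrow> b \<in> carrier A \<Longrightarrow> ba_le A b (join A a b)"
  by (simp_all add: le_iff_join join_assoc[symmetric])
    (simp add: join_commute[of b "join A a b"] join_assoc)

lemma le_meetI:
  "c \<in> carrier A \<Longrightarrow> a \<in> carrier A \<Longrightarrow> b \<in> carrier A \<Longrightarrow> ba_le A c a \<Longrightarrow> ba_le A c b \<Longrightarrow>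
   ba_le A c (meet A a b)"
  unfolding ba_le_def using meet_assoc[of c a b] by simp

lemma join_leI:
  "c \<in> carrier A \<Longrightarrow> a \<in> carrier A \<Longrightarrow> b \<in> carrier A \<Longrightarrow> ba_le A a c \<Longrightarrow> ba_le A b c \<Longrightarrow>
   ba_le A (join A a b) c"
  by (simp add: le_iff_join join_assoc)

lemma meet_mono:
  "a \<in> carrier A \<Longrightarrow> b \<in> carrier A \<Longrightarrow> a' \<in> carrier A \<Longrightarrow> b' \<in> carrier A \<Longrightarrow>
   ba_le A a a' \<Longrightarrow> ba_le A b b' \<Longrightarrow> ba_le A (meet A a b) (meet A a' b')"
  by (intro le_meetI meet_closed)
    (auto intro: le_trans[OF _ _ _ meet_le1] le_trans[OF _ _ _ meet_le2])

lemma zero_le [simp]: "a \<in> carrier A \<Longrightarrow> ba_le A (zero A) a"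
  unfolding ba_le_def by (simp add: meet_commute[of "zero A"])

lemma le_one [simp]: "a \<in> carrier A \<Longrightarrow> ba_le A a (one A)"
  unfolding ba_le_def by simp

lemma one_le_iff: "a \<in> carrier A \<Longrightarrow> ba_le A (one A) a \<longleftrightarrow> a = one A"
  unfolding ba_le_def by (simp add: meet_commute[of "one A"])

lemma join_meet_neg: "a \<in> carrier A \<Longrightarrow> b \<in> carrier A \<Longrightarrow> join A (meet A a b) (meet A a (neg A b)) = a"
  by (simp add: meet_join_distrib[symmetric] join_neg)

lemma join_meet_neg_neg:
  assumes "a \<in> carrier A" "b \<in> carrier A"
  shows "meet A (join A a b) (meet A (neg A a) (neg A b)) = zero A"
proof -
  have "meet A (join A a b) (meet A (neg A a) (neg A b))
       = join A (meet A (meet A (neg A a) (neg A b)) a) (meet A (meet A (neg A a) (neg A b)) b)"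
    using assms by (simp add: meet_commute[of "join A a b"] meet_join_distrib)
  also have "meet A (meet A (neg A a) (neg A b)) a = zero A"
    using assms meet_assoc[of a "neg A a" "neg A b"]
    by (simp add: meet_commute[of _ a] meet_neg meet_commute[of "zero A"])
  also have "meet A (meet A (neg A a) (neg A b)) b = zero A"
    using assms by (simp add: meet_assoc meet_commute[of "neg A b" b] meet_neg)
  finally show ?thesis using assms by simp
qed

lemma ba_filter_one:
  assumes "ba_filter A F" shows "one A \<in> F"
proof -
  obtain f where "f \<in> F" using assms unfolding ba_filter_def by blast
  moreover have "f \<in> carrier A" using assms \<open>f \<in> F\<close> unfolding ba_filter_def by blast
  ultimately show ?thesis using assms le_one one_closed unfolding ba_filter_def by blast
qed

lemma ultrafilter_of_iff:
  "ultrafilter_of A x \<longleftrightarrow> ba_filter A x \<and> zero A \<notin> x \<and> (\<forall>a\<in>carrier A. a \<in> x \<or> neg A a \<in> x)"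
proof
  assume "ultrafilter_of A x"
  then show "ba_filter A x \<and> zero A \<notin> x \<and> (\<forall>a\<in>carrier A. a \<in> x \<or> neg A a \<in> x)"
    unfolding ultrafilter_of_def ba_filter_def by blast
next
  assume x: "ba_filter A x \<and> zero A \<notin> x \<and> (\<forall>a\<in>carrier A. a \<in> x \<or> neg A a \<in> x)"
  then have "one A \<in> x" using ba_filter_one by blast
  with x show "ultrafilter_of A x" unfolding ultrafilter_of_def ba_filter_def by blast
qed

lemma ultrafilter_imp_filter: "ultrafilter_of A x \<Longrightarrow> ba_filter A x"
  by (simp add: ultrafilter_of_iff)

lemma ba_filter_meet_iff:
  "ba_filter A F \<Longrightarrow> a \<in> carrier A \<Longrightarrow> b \<in> carrier A \<Longrightarrow> meet A a b \<in> F \<longleftrightarrow> a \<in> F \<and> b \<in> F"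
  unfolding ba_filter_def by (meson meet_closed meet_le1 meet_le2)

lemma ba_filter_upward: "ba_filter A F \<Longrightarrow> a \<in> F \<Longrightarrow> b \<in> carrier A \<Longrightarrow> ba_le A a b \<Longrightarrow> b \<in> F"
  unfolding ba_filter_def by blast

lemma ultrafilter_subset_carrier: "ultrafilter_of A x \<Longrightarrow> x \<subseteq> carrier A"
  and ultrafilter_zero: "ultrafilter_of A x \<Longrightarrow> zero A \<notin> x"
  and ultrafilter_one: "ultrafilter_of A x \<Longrightarrow> one A \<in> x"
  and ultrafilter_total: "ultrafilter_of A x \<Longrightarrow> a \<in> carrier A \<Longrightarrow> a \<in> x \<or> neg A a \<in> x"
  unfolding ultrafilter_of_def by blast+

lemma ultrafilter_neg_iff:
  assumes x: "ultrafilter_of A x" and a: "a \<in> carrier A"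
  shows "neg A a \<in> x \<longleftrightarrow> a \<notin> x"
proof -
  have "meet A a (neg A a) \<notin> x" using ultrafilter_zero[OF x] by (simp add: meet_neg a)
  then have "\<not> (a \<in> x \<and> neg A a \<in> x)"
    using ba_filter_meet_iff[OF ultrafilter_imp_filter[OF x] a neg_closed[OF a]] by blast
  then show ?thesis using ultrafilter_total[OF x a] by blast
qed

lemma ultrafilter_join_iff:
  assumes x: "ultrafilter_of A x" and a: "a \<in> carrier A" and b: "b \<in> carrier A"
  shows "join A a b \<in> x \<longleftrightarrow> a \<in> x \<or> b \<in> x"
proof
  assume ab: "join A a b \<in> x"
  show "a \<in> x \<or> b \<in> x"
  proof (rule ccontr)
    assume "\<not> (a \<in> x \<or> b \<in> x)"
    then have "neg A a \<in> x" "neg A b \<in> x" using ultrafilter_neg_iff[OF x] a b by blast+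
    then have "meet A (join A a b) (meet A (neg A a) (neg A b)) \<in> x"
      using ab ba_filter_meet_iff[OF ultrafilter_imp_filter[OF x]] a b by simp
    then show False using ultrafilter_zero[OF x] by (simp add: join_meet_neg_neg a b)
  qed
next
  assume "a \<in> x \<or> b \<in> x"
  then show "join A a b \<in> x"
  proof
    assume "a \<in> x" then show ?thesis
      using ba_filter_upward[OF ultrafilter_imp_filter[OF x]] a b by simp
  next
    assume "b \<in> x" then show ?thesis
      using ba_filter_upward[OF ultrafilter_imp_filter[OF x]] a b by simp
  qed
qed

lemma ultrafilter_subset_eq:
  assumes x: "ultrafilter_of A x" and y: "ultrafilter_of A y" and "x \<subseteq> y"
  shows "x = y"
proof (rule ccontr)
  assume "x \<noteq> y"
  with \<open>x \<subseteq> y\<close> obtain a where "a \<in> y" "a \<notin> x" by blast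
  moreover have "a \<in> carrier A" using ultrafilter_subset_carrier[OF y] \<open>a \<in> y\<close> by blast
  ultimately show False
    using ultrafilter_neg_iff[OF x] ultrafilter_neg_iff[OF y] \<open>x \<subseteq> y\<close> by blast
qed

lemma ba_filter_principal: "a \<in> carrier A \<Longrightarrow> ba_filter A (principal_filter A a)"
  unfolding ba_filter_def principal_filter_def by (auto intro: le_meetI le_trans)

lemma ba_ideal_principal: "a \<in> carrier A \<Longrightarrow> ba_ideal A (principal_ideal A a)"
  unfolding ba_ideal_def principal_ideal_def by (auto intro: join_leI le_trans)

lemma ba_ideal_compl_ultrafilter: "ultrafilter_of A x \<Longrightarrow> ba_ideal A (carrier A - x)"
  unfolding ba_ideal_def
  by (auto simp: ultrafilter_join_iff) (auto simp: ultrafilter_of_def)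

lemma ba_filter_adjoin:
  assumes M: "ba_filter A M" and a: "a \<in> carrier A"
  shows "ba_filter A {b \<in> carrier A. \<exists>f\<in>M. ba_le A (meet A f a) b}" (is "ba_filter A ?N")
    and "M \<subseteq> {b \<in> carrier A. \<exists>f\<in>M. ba_le A (meet A f a) b}"
    and "a \<in> {b \<in> carrier A. \<exists>f\<in>M. ba_le A (meet A f a) b}"
proof -
  have MA: "M \<subseteq> carrier A" using M unfolding ba_filter_def by blast
  show "M \<subseteq> ?N" using MA a meet_le1 by blast
  show "a \<in> ?N" using a ba_filter_one[OF M] by force
  show "ba_filter A ?N"
    unfolding ba_filter_def
  proof (intro conjI ballI impI)
    fix b c assume "b \<in> ?N" "c \<in> ?N"
    then obtain f g where fg: "f \<in> M" "g \<in> M" "b \<in> carrier A" "c \<in> carrier A"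
      "ba_le A (meet A f a) b" "ba_le A (meet A g a) c" by blast
    then have fgA: "f \<in> carrier A" "g \<in> carrier A" using MA by auto
    have "ba_le A (meet A (meet A f g) a) (meet A f a)"
      and "ba_le A (meet A (meet A f g) a) (meet A g a)"
      using fgA a by (intro meet_mono; simp)+
    then have "ba_le A (meet A (meet A f g) a) b" "ba_le A (meet A (meet A f g) a) c"
      using fg fgA a le_trans[of "meet A (meet A f g) a" "meet A f a" b]
        le_trans[of "meet A (meet A f g) a" "meet A g a" c] by auto
    then have "ba_le A (meet A (meet A f g) a) (meet A b c)"
      using fg fgA a by (intro le_meetI) simp_all
    moreover have "meet A f g \<in> M" using M fg unfolding ba_filter_def by blast
    ultimately show "meet A b c \<in> ?N" using fg by auto
  next
    fix b c assume "b \<in> ?N" "c \<in> carrier A" "ba_le A b c"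
    then obtain f where "f \<in> M" "b \<in> carrier A" "ba_le A (meet A f a) b" by blast
    moreover have "meet A f a \<in> carrier A" using MA \<open>f \<in> M\<close> a by auto
    ultimately show "c \<in> ?N"
      using \<open>c \<in> carrier A\<close> \<open>ba_le A b c\<close> le_trans[of "meet A f a" b c] by auto
  qed (use \<open>a \<in> ?N\<close> in auto)
qed

lemma maximal_disjoint_filter_is_ultrafilter:
  assumes M: "ba_filter A M" and J: "ba_ideal A J" and MJ: "M \<inter> J = {}"
    and maximal: "\<And>N. ba_filter A N \<Longrightarrow> M \<subseteq> N \<Longrightarrow> N \<inter> J = {} \<Longrightarrow> N = M"
  shows "ultrafilter_of A M"
proof -
  have MA: "M \<subseteq> carrier A" using M unfolding ba_filter_def by blast
  have meet_in_J: "\<exists>f\<in>M. meet A f a \<in> J" if a: "a \<in> carrier A" "a \<notin> M" for a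
  proof (rule ccontr)
    assume none: "\<not> (\<exists>f\<in>M. meet A f a \<in> J)"
    let ?N = "{b \<in> carrier A. \<exists>f\<in>M. ba_le A (meet A f a) b}"
    have "?N \<inter> J = {}"
    proof (rule ccontr)
      assume "?N \<inter> J \<noteq> {}"
      then obtain b f where "b \<in> J" "f \<in> M" "ba_le A (meet A f a) b" by blast
      moreover have "meet A f a \<in> carrier A" using MA \<open>f \<in> M\<close> a by auto
      ultimately have "meet A f a \<in> J" using J unfolding ba_ideal_def by blast
      with none \<open>f \<in> M\<close> show False by blast
    qed
    then have "?N = M" using maximal ba_filter_adjoin[OF M a(1)] by blast
    then show False using ba_filter_adjoin(3)[OF M a(1)] a(2) by blast
  qed
  have "a \<in> M \<or> neg A a \<in> M" if a: "a \<in> carrier A" for a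
  proof (rule ccontr)
    assume "\<not> (a \<in> M \<or> neg A a \<in> M)"
    then obtain f g where fg: "f \<in> M" "meet A f a \<in> J" "g \<in> M" "meet A g (neg A a) \<in> J"
      using meet_in_J a by (meson neg_closed)
    define h where "h = meet A f g"
    have fA: "f \<in> carrier A" and gA: "g \<in> carrier A" using fg MA by auto
    have hM: "h \<in> M" and hA: "h \<in> carrier A"
      using M fg fA gA unfolding h_def ba_filter_def by auto
    have "meet A h a \<in> J"
      using J fg fA gA a meet_mono[of h a f a] unfolding h_def ba_ideal_def by auto
    moreover have "meet A h (neg A a) \<in> J"
      using J fg fA gA a meet_mono[of h "neg A a" g "neg A a"] unfolding h_def ba_ideal_def by auto
    ultimately have "join A (meet A h a) (meet A h (neg A a)) \<in> J"
      using J unfolding ba_ideal_def by blast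
    then have "h \<in> J" by (simp add: join_meet_neg hA a)
    then show False using hM MJ by blast
  qed
  moreover have "zero A \<notin> M" using J MJ unfolding ba_ideal_def by blast
  ultimately show ?thesis using M unfolding ultrafilter_of_iff by blast
qed

theorem exists_ultrafilter_separating:
  assumes F: "ba_filter A F" and J: "ba_ideal A J" and FJ: "F \<inter> J = {}"
  shows "\<exists>x. ultrafilter_of A x \<and> F \<subseteq> x \<and> x \<inter> J = {}"
proof -
  let ?\<A> = "{M. ba_filter A M \<and> F \<subseteq> M \<and> M \<inter> J = {}}"
  have "\<Union>\<C> \<in> ?\<A>" if "\<C> \<noteq> {}" "subset.chain ?\<A> \<C>" for \<C>
  proof -
    have "ba_filter A (\<Union>\<C>)"
      using that by (intro ba_filter_Union_chain) (auto simp: subset_chain_def)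
    moreover have "F \<subseteq> \<Union>\<C>" "\<Union>\<C> \<inter> J = {}"
      using that unfolding subset_chain_def by blast+
    ultimately show ?thesis by blast
  qed
  moreover have "?\<A> \<noteq> {}" using F FJ by blast
  ultimately obtain M where M: "M \<in> ?\<A>" and maximal: "\<forall>N\<in>?\<A>. M \<subseteq> N \<longrightarrow> N = M"
    by (metis (no_types, lifting) subset_Zorn_nonempty)
  have "ultrafilter_of A M"
  proof (rule maximal_disjoint_filter_is_ultrafilter[OF _ J])
    fix N assume "ba_filter A N" "M \<subseteq> N" "N \<inter> J = {}"
    then show "N = M" using M maximal by blast
  qed (use M in blast)+
  then show ?thesis using M by blast
qed

corollary exists_ultrafilter_avoiding:
  assumes F: "ba_filter A F" and b: "b \<in> carrier A" "b \<notin> F"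
  shows "\<exists>x. ultrafilter_of A x \<and> F \<subseteq> x \<and> b \<notin> x"
proof -
  have "F \<inter> principal_ideal A b = {}"
    using F b unfolding ba_filter_def principal_ideal_def by blast
  then show ?thesis
    using exists_ultrafilter_separating[OF F ba_ideal_principal[OF b(1)]] b(1)
    unfolding principal_ideal_def by auto
qed

corollary exists_ultrafilter_not_le:
  assumes "a \<in> carrier A" "b \<in> carrier A" "\<not> ba_le A a b"
  shows "\<exists>x. ultrafilter_of A x \<and> a \<in> x \<and> b \<notin> x"
  using exists_ultrafilter_avoiding[OF ba_filter_principal, of a b] assms
  unfolding principal_filter_def by auto

section \<open>The Stone space of a Boolean algebra\<close>

lemma stone_map_zero: "stone_map A (zero A) = {}"
  unfolding stone_map_def using ultrafilter_zero by auto

lemma stone_map_one: "stone_map A (one A) = Collect (ultrafilter_of A)"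
  unfolding stone_map_def using ultrafilter_one by auto

lemma stone_map_meet:
  "a \<in> carrier A \<Longrightarrow> b \<in> carrier A \<Longrightarrow> stone_map A (meet A a b) = stone_map A a \<inter> stone_map A b"
  unfolding stone_map_def using ba_filter_meet_iff[OF ultrafilter_imp_filter] by auto

lemma stone_map_join:
  "a \<in> carrier A \<Longrightarrow> b \<in> carrier A \<Longrightarrow> stone_map A (join A a b) = stone_map A a \<union> stone_map A b"
  unfolding stone_map_def using ultrafilter_join_iff by auto

lemma stone_map_neg:
  "a \<in> carrier A \<Longrightarrow> stone_map A (neg A a) = Collect (ultrafilter_of A) - stone_map A a"
  unfolding stone_map_def using ultrafilter_neg_iff by auto

lemma stone_map_subset_iff:
  assumes "a \<in> carrier A" "b \<in> carrier A"
  shows "stone_map A a \<subseteq> stone_map A b \<longleftrightarrow> ba_le A a b"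
proof
  assume "ba_le A a b"
  then show "stone_map A a \<subseteq> stone_map A b"
    unfolding stone_map_def using ba_filter_upward[OF ultrafilter_imp_filter] assms(2) by blast
qed (use exists_ultrafilter_not_le[OF assms] in \<open>auto simp: stone_map_def\<close>)

lemma topspace_Ult: "topspace (Ult A) = Collect (ultrafilter_of A)"
proof -
  have "\<Union>(stone_map A ` carrier A) = Collect (ultrafilter_of A)"
    using stone_map_one one_closed unfolding stone_map_def by blast
  then show ?thesis unfolding Ult_def by simp
qed

lemma openin_stone_map: "a \<in> carrier A \<Longrightarrow> openin (Ult A) (stone_map A a)"
  unfolding Ult_def by (rule topology_generated_by_Basis) simp

lemma closedin_stone_map: "a \<in> carrier A \<Longrightarrow> closedin (Ult A) (stone_map A a)"
  unfolding closedin_def topspace_Ult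
  using openin_stone_map[of "neg A a"] stone_map_neg[of a]
  by (auto simp: stone_map_def Diff_Diff_Int)

lemma Ult_basic_nbhd:
  assumes "openin (Ult A) U" "x \<in> U"
  shows "\<exists>a\<in>carrier A. x \<in> stone_map A a \<and> stone_map A a \<subseteq> U"
proof -
  have "generate_topology_on (stone_map A ` carrier A) U"
    using assms(1) unfolding Ult_def by (rule openin_topology_generated_by)
  then show ?thesis using assms(2)
  proof (induction arbitrary: x rule: generate_topology_on.induct)
    case (Int U V)
    then obtain a b where "a \<in> carrier A" "b \<in> carrier A" "x \<in> stone_map A a" "stone_map A a \<subseteq> U"
      "x \<in> stone_map A b" "stone_map A b \<subseteq> V" by blast
    then show ?case by (intro bexI[of _ "meet A a b"]) (auto simp: stone_map_meet)
  qed blast+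
qed

lemma ba_ideal_generated:
  assumes G: "G \<subseteq> carrier A"
  shows "ba_ideal A (ideal_generated A G)"
proof -
  have "ideal_generated A G \<subseteq> carrier A"
  proof
    fix b assume "b \<in> ideal_generated A G"
    then show "b \<in> carrier A" by (induction rule: ideal_generated.induct) (use G in auto)
  qed
  then show ?thesis unfolding ba_ideal_def by (blast intro: ideal_generated.intros)
qed

lemma stone_map_ideal_generated_cover:
  assumes G: "G \<subseteq> carrier A" and b: "b \<in> ideal_generated A G"
  shows "\<exists>G0. finite G0 \<and> G0 \<subseteq> G \<and> stone_map A b \<subseteq> \<Union>(stone_map A ` G0)"
  using b
proof (induction rule: ideal_generated.induct)
  case gen_zero
  then show ?case by (intro exI[of _ "{}"]) (simp add: stone_map_zero)
next
  case (gen_base a)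
  then show ?case by (intro exI[of _ "{a}"]) simp
next
  case (gen_join a b)
  then obtain G1 G2 where "finite G1" "G1 \<subseteq> G" "stone_map A a \<subseteq> \<Union>(stone_map A ` G1)"
    "finite G2" "G2 \<subseteq> G" "stone_map A b \<subseteq> \<Union>(stone_map A ` G2)" by blast
  moreover have "a \<in> carrier A" "b \<in> carrier A"
    using ba_ideal_generated[OF G] gen_join.hyps unfolding ba_ideal_def by blast+
  ultimately show ?case by (intro exI[of _ "G1 \<union> G2"]) (auto simp: stone_map_join)
next
  case (gen_down a b)
  then obtain G1 where "finite G1" "G1 \<subseteq> G" "stone_map A a \<subseteq> \<Union>(stone_map A ` G1)" by blast
  moreover have "a \<in> carrier A"
    using ba_ideal_generated[OF G] gen_down.hyps unfolding ba_ideal_def by blast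
  ultimately show ?case
    using stone_map_subset_iff[of b a] gen_down.hyps by (intro exI[of _ G1]) auto
qed

text \<open>If no finitely many members of an open cover suffice, the top element lies outside the
  ideal generated by the basic clopen sets refining the cover, and an ultrafilter avoiding that
  ideal is covered by no member.\<close>
lemma compact_space_Ult: "compact_space (Ult A)"
  unfolding compact_space_alt topspace_Ult
proof (intro allI impI)
  fix \<U> assume \<U>: "(\<forall>U\<in>\<U>. openin (Ult A) U) \<and> Collect (ultrafilter_of A) \<subseteq> \<Union>\<U>"
  define G where "G = {a \<in> carrier A. \<exists>U\<in>\<U>. stone_map A a \<subseteq> U}"
  have G_carrier: "G \<subseteq> carrier A" unfolding G_def by blast
  show "\<exists>\<F>. finite \<F> \<and> \<F> \<subseteq> \<U> \<and> Collect (ultrafilter_of A) \<subseteq> \<Union>\<F>"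
  proof (cases "one A \<in> ideal_generated A G")
    case True
    then obtain G0 where G0: "finite G0" "G0 \<subseteq> G" "stone_map A (one A) \<subseteq> \<Union>(stone_map A ` G0)"
      using stone_map_ideal_generated_cover[OF G_carrier True] by blast
    have "\<forall>a\<in>G0. \<exists>U. U \<in> \<U> \<and> stone_map A a \<subseteq> U" using G0(2) unfolding G_def by blast
    then have "\<exists>f. \<forall>a\<in>G0. f a \<in> \<U> \<and> stone_map A a \<subseteq> f a" by (rule bchoice)
    then obtain f where f: "\<forall>a\<in>G0. f a \<in> \<U> \<and> stone_map A a \<subseteq> f a" by blast
    have "Collect (ultrafilter_of A) \<subseteq> \<Union>(f ` G0)"
    proof
      fix x assume "x \<in> Collect (ultrafilter_of A)"
      then obtain a where "a \<in> G0" "x \<in> stone_map A a" using G0(3) unfolding stone_map_one by blast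
      then show "x \<in> \<Union>(f ` G0)" using f by blast
    qed
    moreover have "f ` G0 \<subseteq> \<U>" using f by blast
    ultimately show ?thesis using G0(1) by (intro exI[of _ "f ` G0"]) simp
  next
    case False
    then have "principal_filter A (one A) \<inter> ideal_generated A G = {}"
      unfolding principal_filter_def by (auto simp: one_le_iff)
    then obtain x where x: "ultrafilter_of A x" "x \<inter> ideal_generated A G = {}"
      using exists_ultrafilter_separating[OF ba_filter_principal[OF one_closed]
          ba_ideal_generated[OF G_carrier]] by blast
    then obtain U where "U \<in> \<U>" "x \<in> U" using \<U> by blast
    then obtain c where "c \<in> carrier A" "x \<in> stone_map A c" "stone_map A c \<subseteq> U"
      using \<U> Ult_basic_nbhd by blast
    then have "c \<in> G" "c \<in> x" using \<open>U \<in> \<U>\<close> unfolding G_def stone_map_def by auto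
    then have "c \<in> x \<inter> ideal_generated A G" by (simp add: gen_base)
    with x show ?thesis by blast
  qed
qed

lemma Hausdorff_space_Ult: "Hausdorff_space (Ult A)"
  unfolding Hausdorff_space_def topspace_Ult
proof (intro allI impI)
  fix x y assume "x \<in> Collect (ultrafilter_of A) \<and> y \<in> Collect (ultrafilter_of A) \<and> x \<noteq> y"
  then have x: "ultrafilter_of A x" and y: "ultrafilter_of A y" and "x \<noteq> y" by auto
  then have "\<not> x \<subseteq> y" using ultrafilter_subset_eq by blast
  then obtain c where c: "c \<in> x" "c \<notin> y" by blast
  then have cA: "c \<in> carrier A" using ultrafilter_subset_carrier[OF x] by blast
  have "x \<in> stone_map A c" "y \<in> stone_map A (neg A c)"
    using x y c ultrafilter_neg_iff[OF y cA] unfolding stone_map_def by auto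
  moreover have "disjnt (stone_map A c) (stone_map A (neg A c))"
    using stone_map_neg[OF cA] unfolding disjnt_def by blast
  ultimately show "\<exists>U V. openin (Ult A) U \<and> openin (Ult A) V \<and> x \<in> U \<and> y \<in> V \<and> disjnt U V"
    using openin_stone_map cA
    by (intro exI[of _ "stone_map A c"] exI[of _ "stone_map A (neg A c)"]) simp
qed

theorem stone_space_Ult: "stone_space (Ult A)"
proof -
  have "Ult A dim_le 0"
    unfolding dimension_le_0_neighbourhood_base_of_clopen neighbourhood_base_of
    using Ult_basic_nbhd openin_stone_map closedin_stone_map by meson
  then show ?thesis
    unfolding stone_space_def using compact_space_Ult Hausdorff_space_Ult by blast
qed

lemma stone_map_Union_finite:
  "finite G \<Longrightarrow> G \<subseteq> carrier A \<Longrightarrow> \<exists>c\<in>carrier A. stone_map A c = \<Union>(stone_map A ` G)"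
proof (induction G rule: finite_induct)
  case empty
  then show ?case using stone_map_zero zero_closed by auto
next
  case (insert a G)
  then obtain c where "c \<in> carrier A" "stone_map A c = \<Union>(stone_map A ` G)" by auto
  with insert.prems show ?case by (intro bexI[of _ "join A a c"]) (auto simp: stone_map_join)
qed

lemma carrier_Clop_Ult: "carrier (Clop (Ult A)) = stone_map A ` carrier A"
proof -
  have "U \<in> stone_map A ` carrier A" if "closedin (Ult A) U" "openin (Ult A) U" for U
  proof -
    have "compactin (Ult A) U" using closedin_compact_space[OF compact_space_Ult that(1)] .
    moreover have "U \<subseteq> \<Union>(stone_map A ` {a \<in> carrier A. stone_map A a \<subseteq> U})"
      using that(2) Ult_basic_nbhd by blast
    ultimately obtain \<F> where \<F>: "finite \<F>" "\<F> \<subseteq> stone_map A ` {a \<in> carrier A. stone_map A a \<subseteq> U}"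
      "U \<subseteq> \<Union>\<F>"
      using compactinD[of "Ult A" U "stone_map A ` {a \<in> carrier A. stone_map A a \<subseteq> U}"]
        openin_stone_map by blast
    then obtain G where G: "finite G" "G \<subseteq> {a \<in> carrier A. stone_map A a \<subseteq> U}" "\<F> = stone_map A ` G"
      by (meson finite_subset_image)
    then obtain c where "c \<in> carrier A" "stone_map A c = \<Union>\<F>"
      using stone_map_Union_finite[of G] by auto
    moreover have "\<Union>\<F> = U" using \<F> G by auto
    ultimately show ?thesis by auto
  qed
  then show ?thesis
    unfolding Clop_def using openin_stone_map closedin_stone_map by auto
qed

end

section \<open>Stone spaces and closed relations\<close>

lemma stone_space_clopen_nbhd:
  assumes "stone_space X" "openin X W" "p \<in> W"
  shows "\<exists>U. closedin X U \<and> openin X U \<and> p \<in> U \<and> U \<subseteq> W"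
proof -
  have "neighbourhood_base_of (\<lambda>U. closedin X U \<and> openin X U) X"
    using assms(1) unfolding stone_space_def dimension_le_0_neighbourhood_base_of_clopen by blast
  then show ?thesis using assms(2,3) unfolding neighbourhood_base_of by blast
qed

lemma stone_space_clopen_between:
  assumes X: "stone_space X" and K: "closedin X K" and W: "openin X W" and "K \<subseteq> W"
  shows "\<exists>U. closedin X U \<and> openin X U \<and> K \<subseteq> U \<and> U \<subseteq> W"
proof -
  let ?\<U> = "{U. closedin X U \<and> openin X U \<and> U \<subseteq> W}"
  have "compactin X K" using X closedin_compact_space[OF _ K] unfolding stone_space_def by blast
  moreover have "K \<subseteq> \<Union>?\<U>"
  proof
    fix p assume "p \<in> K"
    then obtain U where "closedin X U" "openin X U" "p \<in> U" "U \<subseteq> W"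
      using stone_space_clopen_nbhd[OF X W] \<open>K \<subseteq> W\<close> by blast
    then show "p \<in> \<Union>?\<U>" by (intro UnionI[of U]) auto
  qed
  ultimately obtain \<F> where \<F>: "finite \<F>" "\<F> \<subseteq> ?\<U>" "K \<subseteq> \<Union>\<F>"
    using compactinD[of X K ?\<U>] by blast
  have "closedin X (\<Union>\<F>)" "openin X (\<Union>\<F>)"
    using \<F> by (auto intro: closedin_Union openin_Union)
  with \<F> show ?thesis by (intro exI[of _ "\<Union>\<F>"]) auto
qed

lemma stone_space_separating_clopen:
  assumes X: "stone_space X" and "p \<in> topspace X" "q \<in> topspace X" "p \<noteq> q"
  shows "\<exists>U. closedin X U \<and> openin X U \<and> p \<in> U \<and> q \<notin> U"
proof -
  have "t1_space X" using X Hausdorff_imp_t1_space unfolding stone_space_def by blast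
  then have "openin X (topspace X - {q})"
    using assms(3) by (simp add: openin_diff t1_space_closedin_singleton)
  then show ?thesis using stone_space_clopen_nbhd[OF X, of "topspace X - {q}" p] assms(2,4) by blast
qed

lemma closedin_Image_closed_rel:
  assumes R: "closed_rel X Y R" and X: "compact_space X" and F: "closedin X F"
  shows "closedin Y (R `` F)"
proof -
  have "R `` F = snd ` (R \<inter> (F \<times> topspace Y))" using R unfolding closed_rel_def by force
  moreover have "closedin (prod_topology X Y) (R \<inter> (F \<times> topspace Y))"
    using R F unfolding closed_rel_def by (intro closedin_Int) (auto simp: closedin_prod_Times_iff)
  ultimately show ?thesis using closed_map_snd[OF X, of Y] unfolding closed_map_def by metis
qed

lemma openin_closed_rel_preimage:
  assumes R: "closed_rel Y Z R" and Z: "compact_space Z" and W: "openin Z W"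
  shows "openin Y {y \<in> topspace Y. R `` {y} \<subseteq> W}"
proof -
  have "topspace Y - {y \<in> topspace Y. R `` {y} \<subseteq> W} = fst ` (R \<inter> (topspace Y \<times> (topspace Z - W)))"
    using R unfolding closed_rel_def by force
  moreover have "closedin (prod_topology Y Z) (R \<inter> (topspace Y \<times> (topspace Z - W)))"
    using R W unfolding closed_rel_def by (intro closedin_Int) (auto simp: closedin_prod_Times_iff)
  ultimately have "closedin Y (topspace Y - {y \<in> topspace Y. R `` {y} \<subseteq> W})"
    using closed_map_fst[OF Z, of Y] unfolding closed_map_def by metis
  then show ?thesis unfolding openin_closedin_eq by auto
qed

lemma closed_rel_converse: "closed_rel X Y R \<Longrightarrow> closed_rel Y X (converse R)"
proof -
  assume R: "closed_rel X Y R"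
  have "converse R = (\<lambda>(x, y). (y, x)) ` R" by force
  moreover have "closed_map (prod_topology X Y) (prod_topology Y X) (\<lambda>(x, y). (y, x))"
    by (rule homeomorphic_imp_closed_map[OF homeomorphic_map_swap])
  ultimately have "closedin (prod_topology Y X) (converse R)"
    using R unfolding closed_rel_def closed_map_def by metis
  then show ?thesis using R unfolding closed_rel_def by auto
qed

section \<open>The functor Clop\<close>

lemma carrier_Clop: "carrier (Clop X) = {U. closedin X U \<and> openin X U}"
  and Clop_simps [simp]: "meet (Clop X) U V = U \<inter> V" "join (Clop X) U V = U \<union> V"
    "neg (Clop X) U = topspace X - U" "zero (Clop X) = {}" "one (Clop X) = topspace X"
  unfolding Clop_def by simp_all

lemma ba_le_Clop [simp]: "ba_le (Clop X) U V \<longleftrightarrow> U \<subseteq> V"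
  unfolding ba_le_def by auto

lemma is_ba_Clop: "is_ba (Clop X)"
  unfolding is_ba_def carrier_Clop Clop_simps
  by (auto intro: closedin_Un openin_Un closedin_Int openin_Int closedin_diff openin_diff
      dest: closedin_subset)

lemma subordination_Clop_rel: "closed_rel X Y R \<Longrightarrow> subordination (Clop X) (Clop Y) (Clop_rel X Y R)"
  unfolding subordination_def Clop_rel_def closed_rel_def carrier_Clop by auto

lemma Clop_rel_id: "Clop_rel X X (stone_id X) = ba_id (Clop X)"
  unfolding Clop_rel_def ba_id_def stone_id_def carrier_Clop
  by (auto dest: closedin_subset)

text \<open>Compactness makes the image of a clopen set closed, and the set of points all of whose
  successors lie in a clopen set open; a clopen set interpolated between the two factors
  the composite subordination.\<close>
lemma Clop_rel_comp:
  assumes Y: "stone_space Y" and X: "compact_space X" and Z: "compact_space Z"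
    and R: "closed_rel X Y R" and R': "closed_rel Y Z R'"
  shows "Clop_rel X Z (R O R') = Clop_rel X Y R O Clop_rel Y Z R'"
proof
  show "Clop_rel X Y R O Clop_rel Y Z R' \<subseteq> Clop_rel X Z (R O R')"
    unfolding Clop_rel_def by blast
next
  show "Clop_rel X Z (R O R') \<subseteq> Clop_rel X Y R O Clop_rel Y Z R'"
  proof (clarify)
    fix U W assume "(U, W) \<in> Clop_rel X Z (R O R')"
    then have U: "closedin X U" "openin X U" and W: "closedin Z W" "openin Z W"
      and RUW: "(R O R') `` U \<subseteq> W" unfolding Clop_rel_def carrier_Clop by auto
    have "R `` U \<subseteq> {y \<in> topspace Y. R' `` {y} \<subseteq> W}"
      using RUW R unfolding closed_rel_def by blast
    then obtain V where V: "closedin Y V" "openin Y V" "R `` U \<subseteq> V"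
        "V \<subseteq> {y \<in> topspace Y. R' `` {y} \<subseteq> W}"
      using stone_space_clopen_between[OF Y closedin_Image_closed_rel[OF R X U(1)]
          openin_closed_rel_preimage[OF R' Z W(2)]] by blast
    then have "(U, V) \<in> Clop_rel X Y R" "(V, W) \<in> Clop_rel Y Z R'"
      using U W unfolding Clop_rel_def carrier_Clop by auto
    then show "(U, W) \<in> Clop_rel X Y R O Clop_rel Y Z R'" by blast
  qed
qed

section \<open>The functor Ult\<close>

lemma subordinationD:
  assumes "subordination A B S"
  shows "S \<subseteq> carrier A \<times> carrier B" and "(zero A, zero B) \<in> S" and "(one A, one B) \<in> S"
    and "\<And>a b c. a \<in> carrier A \<Longrightarrow> b \<in> carrier A \<Longrightarrow> c \<in> carrier B \<Longrightarrow>
           (a, c) \<in> S \<Longrightarrow> (b, c) \<in> S \<Longrightarrow> (join A a b, c) \<in> S"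
    and "\<And>a c d. a \<in> carrier A \<Longrightarrow> c \<in> carrier B \<Longrightarrow> d \<in> carrier B \<Longrightarrow>
           (a, c) \<in> S \<Longrightarrow> (a, d) \<in> S \<Longrightarrow> (a, meet B c d) \<in> S"
    and "\<And>a b c d. a \<in> carrier A \<Longrightarrow> b \<in> carrier A \<Longrightarrow> c \<in> carrier B \<Longrightarrow> d \<in> carrier B \<Longrightarrow>
           ba_le A a b \<Longrightarrow> (b, c) \<in> S \<Longrightarrow> ba_le B c d \<Longrightarrow> (a, d) \<in> S"
  using assms unfolding subordination_def by blast+

lemma ba_filter_subord_Image:
  assumes "is_ba A" "is_ba B" and S: "subordination A B S" and F: "ba_filter A F"
  shows "ba_filter B (S `` F)"
  unfolding ba_filter_def
proof (intro conjI ballI impI)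
  interpret A: bool_alg A by (rule bool_alg.intro) fact
  interpret B: bool_alg B by (rule bool_alg.intro) fact
  note S_ax = subordinationD[OF S]
  have FA: "F \<subseteq> carrier A" using F unfolding ba_filter_def by blast
  show "S `` F \<subseteq> carrier B" using S_ax(1) by blast
  show "S `` F \<noteq> {}" using S_ax(3) A.ba_filter_one[OF F] by blast
  fix c d assume "c \<in> S `` F"
  then obtain e where e: "e \<in> F" "(e, c) \<in> S" by blast
  then have eA: "e \<in> carrier A" and cB: "c \<in> carrier B" using S_ax(1) by auto
  {
    assume "d \<in> carrier B" "ba_le B c d"
    then have "(e, d) \<in> S" using S_ax(6)[of e e c d] e eA cB by simp
    then show "d \<in> S `` F" using e by blast
  }
  assume "d \<in> S `` F"
  then obtain f where f: "f \<in> F" "(f, d) \<in> S" by blast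
  then have fA: "f \<in> carrier A" and dB: "d \<in> carrier B" using S_ax(1) by auto
  have efF: "meet A e f \<in> F" using F e f unfolding ba_filter_def by blast
  have "(meet A e f, c) \<in> S" "(meet A e f, d) \<in> S"
    using S_ax(6)[of "meet A e f" e c c] S_ax(6)[of "meet A e f" f d d] e f eA fA cB dB by simp_all
  then have "(meet A e f, meet B c d) \<in> S" using S_ax(5) eA fA cB dB by simp
  then show "meet B c d \<in> S `` F" using efF by blast
qed

lemma ba_ideal_subord_preimage:
  assumes "is_ba A" "is_ba B" and S: "subordination A B S" and K: "ba_ideal B K"
  shows "ba_ideal A {a \<in> carrier A. \<exists>c\<in>K. (a, c) \<in> S}"
  unfolding ba_ideal_def
proof (intro conjI ballI impI)
  interpret A: bool_alg A by (rule bool_alg.intro) fact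
  interpret B: bool_alg B by (rule bool_alg.intro) fact
  note S_ax = subordinationD[OF S]
  have KB: "K \<subseteq> carrier B" using K unfolding ba_ideal_def by blast
  show "zero A \<in> {a \<in> carrier A. \<exists>c\<in>K. (a, c) \<in> S}"
    using S_ax(2) K unfolding ba_ideal_def by auto
  fix a b assume "a \<in> {a \<in> carrier A. \<exists>c\<in>K. (a, c) \<in> S}"
  then obtain c where a: "a \<in> carrier A" and c: "c \<in> K" "(a, c) \<in> S" by blast
  then have cB: "c \<in> carrier B" using KB by blast
  {
    assume "b \<in> carrier A" "ba_le A b a"
    then show "b \<in> {a \<in> carrier A. \<exists>c\<in>K. (a, c) \<in> S}"
      using S_ax(6)[of b a c c] a c cB by auto
  }
  assume "b \<in> {a \<in> carrier A. \<exists>c\<in>K. (a, c) \<in> S}"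
  then obtain d where b: "b \<in> carrier A" and d: "d \<in> K" "(b, d) \<in> S" by blast
  then have dB: "d \<in> carrier B" using KB by blast
  have "(a, join B c d) \<in> S" "(b, join B c d) \<in> S"
    using S_ax(6)[of a a c "join B c d"] S_ax(6)[of b b d "join B c d"] a b c d cB dB by simp_all
  then have "(join A a b, join B c d) \<in> S" using S_ax(4) a b cB dB by simp
  moreover have "join B c d \<in> K" using K c d unfolding ba_ideal_def by blast
  ultimately show "join A a b \<in> {a \<in> carrier A. \<exists>c\<in>K. (a, c) \<in> S}" using a b by auto
qed (blast)

text \<open>The relation is the intersection, over all pairs (a, c) \<in> S, of the closed sets of pairs
  of ultrafilters (x, y) with a \<in> x \<longrightarrow> c \<in> y.\<close>
lemma closed_rel_Ult_rel:
  assumes "is_ba A" "is_ba B" and S: "subordination A B S"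
  shows "closed_rel (Ult A) (Ult B) (Ult_rel A B S)"
proof -
  interpret A: bool_alg A by (rule bool_alg.intro) fact
  interpret B: bool_alg B by (rule bool_alg.intro) fact
  note S_ax = subordinationD[OF S]
  define box where "box ac = (topspace (Ult A) - stone_map A (fst ac)) \<times> topspace (Ult B)
      \<union> topspace (Ult A) \<times> stone_map B (snd ac)" for ac
  have "Ult_rel A B S = \<Inter>(box ` S)"
  proof (intro set_eqI iffI)
    fix p assume "p \<in> \<Inter>(box ` S)"
    then have "p \<in> box (zero A, zero B)" using S_ax(2) by blast
    then obtain x y where p: "p = (x, y)" "ultrafilter_of A x" "ultrafilter_of B y"
      unfolding box_def A.topspace_Ult B.topspace_Ult stone_map_def by auto
    moreover have "S `` x \<subseteq> y"
      using \<open>p \<in> \<Inter>(box ` S)\<close> p unfolding box_def stone_map_def by auto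
    ultimately show "p \<in> Ult_rel A B S" unfolding Ult_rel_def by blast
  qed (auto simp: Ult_rel_def box_def A.topspace_Ult B.topspace_Ult stone_map_def; blast)
  moreover have "closedin (prod_topology (Ult A) (Ult B)) (\<Inter>(box ` S))"
  proof (rule closedin_Inter)
    show "box ` S \<noteq> {}" using S_ax(2) by blast
    fix K assume "K \<in> box ` S"
    then obtain a c where "K = box (a, c)" "a \<in> carrier A" "c \<in> carrier B" using S_ax(1) by auto
    then show "closedin (prod_topology (Ult A) (Ult B)) K"
      unfolding box_def
      by (auto intro!: closedin_Un simp: closedin_prod_Times_iff A.openin_stone_map
          B.closedin_stone_map closedin_diff)
  qed
  moreover have "Ult_rel A B S \<subseteq> topspace (Ult A) \<times> topspace (Ult B)"
    unfolding Ult_rel_def A.topspace_Ult B.topspace_Ult by auto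
  ultimately show ?thesis unfolding closed_rel_def by simp
qed

lemma Ult_rel_ba_id:
  assumes "is_ba A"
  shows "Ult_rel A A (ba_id A) = stone_id (Ult A)"
proof -
  interpret A: bool_alg A by (rule bool_alg.intro) fact
  have "ba_id A `` x = x" if x: "ultrafilter_of A x" for x
  proof
    show "ba_id A `` x \<subseteq> x"
      using A.ba_filter_upward[OF A.ultrafilter_imp_filter[OF x]] unfolding ba_id_def by auto
    show "x \<subseteq> ba_id A `` x"
    proof
      fix b assume "b \<in> x"
      moreover have "b \<in> carrier A" using A.ultrafilter_subset_carrier[OF x] \<open>b \<in> x\<close> by blast
      ultimately show "b \<in> ba_id A `` x" unfolding ba_id_def by (auto intro: ImageI[of b])
    qed
  qed
  then have "Ult_rel A A (ba_id A) = {(x, y). ultrafilter_of A x \<and> ultrafilter_of A y \<and> x \<subseteq> y}"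
    unfolding Ult_rel_def by auto
  also have "\<dots> = Id_on (Collect (ultrafilter_of A))"
    using A.ultrafilter_subset_eq by blast
  finally show ?thesis unfolding stone_id_def A.topspace_Ult .
qed

text \<open>For (x, z) related by the composite, the filter S `` x avoids the ideal of elements
  related by S' to something outside z; an ultrafilter separating the two is the intermediate
  point.\<close>
lemma Ult_rel_comp:
  assumes A: "is_ba A" and B: "is_ba B" and C: "is_ba C"
    and S: "subordination A B S" and S': "subordination B C S'"
  shows "Ult_rel A C (S O S') = Ult_rel A B S O Ult_rel B C S'"
proof
  show "Ult_rel A B S O Ult_rel B C S' \<subseteq> Ult_rel A C (S O S')"
    unfolding Ult_rel_def by blast
next
  interpret B: bool_alg B by (rule bool_alg.intro) fact
  interpret C: bool_alg C by (rule bool_alg.intro) fact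
  show "Ult_rel A C (S O S') \<subseteq> Ult_rel A B S O Ult_rel B C S'"
  proof clarify
    fix x z assume "(x, z) \<in> Ult_rel A C (S O S')"
    then have x: "ultrafilter_of A x" and z: "ultrafilter_of C z" and xz: "(S O S') `` x \<subseteq> z"
      unfolding Ult_rel_def by auto
    let ?J = "{b \<in> carrier B. \<exists>c\<in>carrier C - z. (b, c) \<in> S'}"
    have "ba_ideal B ?J"
      by (rule ba_ideal_subord_preimage[OF B C S' C.ba_ideal_compl_ultrafilter[OF z]])
    moreover have "ba_filter B (S `` x)"
      using ba_filter_subord_Image[OF A B S] bool_alg.ultrafilter_imp_filter[OF bool_alg.intro[OF A] x]
      by blast
    moreover have "S `` x \<inter> ?J = {}" using xz by blast
    ultimately obtain y where y: "ultrafilter_of B y" "S `` x \<subseteq> y" "y \<inter> ?J = {}"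
      using B.exists_ultrafilter_separating by blast
    have "S' `` y \<subseteq> z" using y subordinationD(1)[OF S'] by blast
    with x y z show "(x, z) \<in> Ult_rel A B S O Ult_rel B C S'" unfolding Ult_rel_def by blast
  qed
qed

text \<open>If (a, c) \<notin> S, an ultrafilter x containing a and avoiding the ideal of S-predecessors of
  elements below c has an image S `` x missing c; an ultrafilter extending S `` x and avoiding c
  is related to x but lies outside the basic clopen set of c.\<close>
lemma Ult_rel_Image_stone_map_subset_iff:
  assumes A: "is_ba A" and B: "is_ba B" and S: "subordination A B S"
    and a: "a \<in> carrier A" and c: "c \<in> carrier B"
  shows "Ult_rel A B S `` stone_map A a \<subseteq> stone_map B c \<longleftrightarrow> (a, c) \<in> S"
proof
  assume "(a, c) \<in> S"
  then show "Ult_rel A B S `` stone_map A a \<subseteq> stone_map B c"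
    unfolding Ult_rel_def stone_map_def by auto
next
  interpret A: bool_alg A by (rule bool_alg.intro) fact
  interpret B: bool_alg B by (rule bool_alg.intro) fact
  note S_ax = subordinationD[OF S]
  assume sub: "Ult_rel A B S `` stone_map A a \<subseteq> stone_map B c"
  show "(a, c) \<in> S"
  proof (rule ccontr)
    assume ac: "(a, c) \<notin> S"
    let ?J = "{d \<in> carrier A. \<exists>c'\<in>principal_ideal B c. (d, c') \<in> S}"
    have J: "ba_ideal A ?J" by (rule ba_ideal_subord_preimage[OF A B S B.ba_ideal_principal[OF c]])
    have "principal_filter A a \<inter> ?J = {}"
      using ac a c S_ax(6)[of a _ _ c] unfolding principal_filter_def principal_ideal_def by blast
    then obtain x where x: "ultrafilter_of A x" "principal_filter A a \<subseteq> x" "x \<inter> ?J = {}"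
      using A.exists_ultrafilter_separating[OF A.ba_filter_principal[OF a] J] by blast
    have "c \<notin> S `` x" using x(3) c S_ax(1) B.le_refl[OF c] unfolding principal_ideal_def by blast
    then obtain y where y: "ultrafilter_of B y" "S `` x \<subseteq> y" "c \<notin> y"
      using B.exists_ultrafilter_avoiding[OF ba_filter_subord_Image[OF A B S] c]
        A.ultrafilter_imp_filter[OF x(1)]
      by blast
    have "a \<in> x" using x(2) a unfolding principal_filter_def by auto
    then have "y \<in> Ult_rel A B S `` stone_map A a"
      using x y unfolding Ult_rel_def stone_map_def by blast
    with sub y show False unfolding stone_map_def by blast
  qed
qed

section \<open>The unit on Stone spaces\<close>

lemma bool_alg_Clop: "bool_alg (Clop X)"
  by (rule bool_alg.intro, rule is_ba_Clop)

definition clopen_nbhds :: "'x topology \<Rightarrow> 'x \<Rightarrow> 'x set set" where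
  "clopen_nbhds X p = {U \<in> carrier (Clop X). p \<in> U}"

lemma eta_rel_eq_graph: "eta_rel X = (\<lambda>p. (p, clopen_nbhds X p)) ` topspace X"
  unfolding eta_rel_def clopen_nbhds_def by auto

lemma ultrafilter_clopen_nbhds: "p \<in> topspace X \<Longrightarrow> ultrafilter_of (Clop X) (clopen_nbhds X p)"
  unfolding ultrafilter_of_def clopen_nbhds_def carrier_Clop
  by (auto intro: closedin_Int openin_Int closedin_diff openin_diff)

lemma clopen_nbhds_inj:
  assumes "stone_space X" "p \<in> topspace X" "q \<in> topspace X" "clopen_nbhds X p = clopen_nbhds X q"
  shows "p = q"
  using stone_space_separating_clopen[OF assms(1-3)] assms(4)
  unfolding clopen_nbhds_def carrier_Clop by blast

text \<open>The members of an ultrafilter of clopen sets are closed and have the finite intersection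
  property, so by compactness they share a point.\<close>
lemma ultrafilter_Clop_eq_clopen_nbhds:
  assumes X: "stone_space X" and u: "ultrafilter_of (Clop X) u"
  shows "\<exists>p\<in>topspace X. u = clopen_nbhds X p"
proof -
  interpret C: bool_alg "Clop X" by (rule bool_alg_Clop)
  have u_clopen: "u \<subseteq> {U. closedin X U \<and> openin X U}"
    using C.ultrafilter_subset_carrier[OF u] unfolding carrier_Clop .
  have Inter_in_u: "\<Inter>\<F> \<in> u" if "finite \<F>" "\<F> \<noteq> {}" "\<F> \<subseteq> u" for \<F>
    using that
  proof (induction rule: finite_ne_induct)
    case (insert U \<F>)
    then have "U \<in> u" "\<Inter>\<F> \<in> u" by auto
    moreover from this have "U \<in> carrier (Clop X)" "\<Inter>\<F> \<in> carrier (Clop X)"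
      using C.ultrafilter_subset_carrier[OF u] by auto
    ultimately have "meet (Clop X) U (\<Inter>\<F>) \<in> u"
      using C.ba_filter_meet_iff[OF C.ultrafilter_imp_filter[OF u]] by blast
    then show ?case by simp
  qed simp
  have "\<Inter>\<F> \<noteq> {}" if "finite \<F>" "\<F> \<subseteq> u" for \<F>
    using Inter_in_u[OF that(1) _ that(2)] C.ultrafilter_zero[OF u] by (cases "\<F> = {}") auto
  then have "\<Inter>u \<noteq> {}"
    using X u_clopen unfolding stone_space_def compact_space_fip by blast
  then obtain p where p: "\<forall>U\<in>u. p \<in> U" by blast
  then have "p \<in> topspace X" using C.ultrafilter_one[OF u] by simp
  moreover have "u \<subseteq> clopen_nbhds X p"
    using p C.ultrafilter_subset_carrier[OF u] unfolding clopen_nbhds_def by blast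
  ultimately show ?thesis
    using C.ultrafilter_subset_eq[OF u ultrafilter_clopen_nbhds] by blast
qed

lemma continuous_map_clopen_nbhds: "continuous_map X (Ult (Clop X)) (clopen_nbhds X)"
  unfolding Ult_def
proof (rule continuous_on_generated_topo)
  interpret C: bool_alg "Clop X" by (rule bool_alg_Clop)
  fix V assume "V \<in> stone_map (Clop X) ` carrier (Clop X)"
  then obtain U where U: "closedin X U" "openin X U" "V = stone_map (Clop X) U"
    unfolding carrier_Clop by blast
  have "clopen_nbhds X p \<in> V \<longleftrightarrow> p \<in> U" if "p \<in> topspace X" for p
    using ultrafilter_clopen_nbhds[OF that] U
    unfolding stone_map_def clopen_nbhds_def carrier_Clop by auto
  then have "clopen_nbhds X -` V \<inter> topspace X = U" using closedin_subset[OF U(1)] by auto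
  with U show "openin X (clopen_nbhds X -` V \<inter> topspace X)" by simp
next
  interpret C: bool_alg "Clop X" by (rule bool_alg_Clop)
  show "clopen_nbhds X ` topspace X \<subseteq> \<Union>(stone_map (Clop X) ` carrier (Clop X))"
    using C.topspace_Ult ultrafilter_clopen_nbhds unfolding Ult_def by auto
qed

lemma closed_rel_eta_rel: "stone_space X \<Longrightarrow> closed_rel X (Ult (Clop X)) (eta_rel X)"
proof -
  interpret C: bool_alg "Clop X" by (rule bool_alg_Clop)
  have "Hausdorff_space (Ult (Clop X))" using C.stone_space_Ult unfolding stone_space_def by blast
  then show ?thesis
    unfolding closed_rel_def eta_rel_eq_graph
    using continuous_map_imp_closed_graph[OF continuous_map_clopen_nbhds[of X]]
      continuous_map_image_subset_topspace[OF continuous_map_clopen_nbhds[of X]]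
    by auto
qed

theorem stone_iso_eta_rel:
  assumes X: "stone_space X"
  shows "stone_iso X (Ult (Clop X)) (eta_rel X)"
  unfolding stone_iso_def
proof (intro conjI exI)
  interpret C: bool_alg "Clop X" by (rule bool_alg_Clop)
  show "closed_rel X (Ult (Clop X)) (eta_rel X)"
    and "closed_rel (Ult (Clop X)) X (converse (eta_rel X))"
    using closed_rel_eta_rel[OF X] closed_rel_converse by blast+
  show "eta_rel X O converse (eta_rel X) = stone_id X"
    unfolding stone_id_def eta_rel_eq_graph using clopen_nbhds_inj[OF X] by auto
  show "converse (eta_rel X) O eta_rel X = stone_id (Ult (Clop X))"
    unfolding stone_id_def eta_rel_eq_graph C.topspace_Ult
    using ultrafilter_Clop_eq_clopen_nbhds[OF X] ultrafilter_clopen_nbhds by fastforce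
qed

lemma closed_rel_clopen_separation:
  assumes X: "stone_space X" and Y: "stone_space Y" and R: "closed_rel X Y R"
    and p: "p \<in> topspace X" and q: "q \<in> topspace Y" and "(p, q) \<notin> R"
  shows "\<exists>U V. closedin X U \<and> openin X U \<and> closedin Y V \<and> openin Y V \<and> p \<in> U \<and> q \<in> V \<and>
           R `` U \<inter> V = {}"
proof -
  have "openin (prod_topology X Y) (topspace (prod_topology X Y) - R)"
    using R by (simp add: closed_rel_def closedin_def)
  moreover have "(p, q) \<in> topspace (prod_topology X Y) - R" using assms(4-6) by simp
  ultimately obtain U0 V0 where UV0: "openin X U0" "openin Y V0" "p \<in> U0" "q \<in> V0"
      "U0 \<times> V0 \<subseteq> topspace (prod_topology X Y) - R"
    by (metis openin_prod_topology_alt)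
  obtain U where U: "closedin X U" "openin X U" "p \<in> U" "U \<subseteq> U0"
    using stone_space_clopen_nbhd[OF X UV0(1,3)] by blast
  obtain V where V: "closedin Y V" "openin Y V" "q \<in> V" "V \<subseteq> V0"
    using stone_space_clopen_nbhd[OF Y UV0(2,4)] by blast
  have "R `` U \<inter> V = {}" using UV0(5) U(4) V(4) by blast
  with U V show ?thesis by (intro exI[of _ U] exI[of _ V]) simp
qed

theorem eta_rel_natural:
  assumes X: "stone_space X" and Y: "stone_space Y" and R: "closed_rel X Y R"
  shows "eta_rel X O Ult_rel (Clop X) (Clop Y) (Clop_rel X Y R) = R O eta_rel Y"
proof (intro set_eqI iffI)
  have R_sub: "R \<subseteq> topspace X \<times> topspace Y" using R unfolding closed_rel_def by blast
  fix z
  assume "z \<in> eta_rel X O Ult_rel (Clop X) (Clop Y) (Clop_rel X Y R)"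
  then obtain p w where z: "z = (p, w)" and p: "p \<in> topspace X" and w: "ultrafilter_of (Clop Y) w"
    and pw: "Clop_rel X Y R `` clopen_nbhds X p \<subseteq> w"
    unfolding eta_rel_eq_graph Ult_rel_def by auto
  obtain q where q: "q \<in> topspace Y" "w = clopen_nbhds Y q"
    using ultrafilter_Clop_eq_clopen_nbhds[OF Y w] by blast
  have "(p, q) \<in> R"
  proof (rule ccontr)
    assume "(p, q) \<notin> R"
    then obtain U V where UV: "closedin X U" "openin X U" "closedin Y V" "openin Y V"
        "p \<in> U" "q \<in> V"
        "R `` U \<inter> V = {}"
      using closed_rel_clopen_separation[OF X Y R p q(1)] by blast
    then have "(U, topspace Y - V) \<in> Clop_rel X Y R"
      using R_sub unfolding Clop_rel_def carrier_Clop by blast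
    moreover have "U \<in> clopen_nbhds X p" using UV unfolding clopen_nbhds_def carrier_Clop by blast
    ultimately have "topspace Y - V \<in> clopen_nbhds Y q" using pw q(2) by blast
    then show False using UV(6) unfolding clopen_nbhds_def by blast
  qed
  then show "z \<in> R O eta_rel Y" using z q unfolding eta_rel_eq_graph by auto
next
  fix z
  assume "z \<in> R O eta_rel Y"
  then obtain p q where z: "z = (p, clopen_nbhds Y q)" and pq: "(p, q) \<in> R" and q: "q \<in> topspace Y"
    unfolding eta_rel_eq_graph by auto
  have p: "p \<in> topspace X" using pq R unfolding closed_rel_def by blast
  have "Clop_rel X Y R `` clopen_nbhds X p \<subseteq> clopen_nbhds Y q"
    using pq unfolding Clop_rel_def clopen_nbhds_def by auto
  then have "(clopen_nbhds X p, clopen_nbhds Y q) \<in> Ult_rel (Clop X) (Clop Y) (Clop_rel X Y R)"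
    using ultrafilter_clopen_nbhds[OF p] ultrafilter_clopen_nbhds[OF q]
    unfolding Ult_rel_def by auto
  then show "z \<in> eta_rel X O Ult_rel (Clop X) (Clop Y) (Clop_rel X Y R)"
    using z p unfolding eta_rel_eq_graph by auto
qed

section \<open>The unit on Boolean algebras\<close>

definition hom_subord :: "'a ba \<Rightarrow> 'b ba \<Rightarrow> ('a \<Rightarrow> 'b) \<Rightarrow> ('a \<times> 'b) set" where
  "hom_subord A B f = {(a, c). a \<in> carrier A \<and> c \<in> carrier B \<and> ba_le B (f a) c}"

definition hom_subord_inv :: "'a ba \<Rightarrow> 'b ba \<Rightarrow> ('a \<Rightarrow> 'b) \<Rightarrow> ('b \<times> 'a) set" where
  "hom_subord_inv A B f = {(c, a). c \<in> carrier B \<and> a \<in> carrier A \<and> ba_le B c (f a)}"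

locale ba_isomorphism =
  A: bool_alg A + B: bool_alg B for A :: "'a ba" and B :: "'b ba" + fixes f :: "'a \<Rightarrow> 'b"
  assumes onto: "f ` carrier A = carrier B"
    and map_zero: "f (zero A) = zero B" and map_one: "f (one A) = one B"
    and map_join: "a \<in> carrier A \<Longrightarrow> b \<in> carrier A \<Longrightarrow> f (join A a b) = join B (f a) (f b)"
    and map_meet: "a \<in> carrier A \<Longrightarrow> b \<in> carrier A \<Longrightarrow> f (meet A a b) = meet B (f a) (f b)"
    and map_le_iff: "a \<in> carrier A \<Longrightarrow> b \<in> carrier A \<Longrightarrow> ba_le B (f a) (f b) \<longleftrightarrow> ba_le A a b"
begin

lemma map_closed [simp]: "a \<in> carrier A \<Longrightarrow> f a \<in> carrier B"
  using onto by blast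

lemma map_mono: "a \<in> carrier A \<Longrightarrow> b \<in> carrier A \<Longrightarrow> ba_le A a b \<Longrightarrow> ba_le B (f a) (f b)"
  by (simp add: map_le_iff)

lemma subordination_hom_subord: "subordination A B (hom_subord A B f)"
  unfolding subordination_def hom_subord_def
  by (auto simp: map_zero map_join intro: B.join_leI B.le_meetI)
    (meson B.le_trans map_closed map_mono)

lemma subordination_hom_subord_inv: "subordination B A (hom_subord_inv A B f)"
  unfolding subordination_def hom_subord_inv_def
  by (auto simp: map_one map_meet intro: B.join_leI B.le_meetI)
    (meson B.le_trans map_closed map_mono)

theorem subord_iso_hom_subord: "subord_iso A B (hom_subord A B f)"
  unfolding subord_iso_def
proof (intro conjI exI)
  show "subordination A B (hom_subord A B f)" "subordination B A (hom_subord_inv A B f)"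
    by (rule subordination_hom_subord subordination_hom_subord_inv)+
  show "hom_subord A B f O hom_subord_inv A B f = ba_id A"
  proof (intro set_eqI iffI)
    fix p assume "p \<in> hom_subord A B f O hom_subord_inv A B f"
    then obtain a c b where p: "p = (a, b)" "a \<in> carrier A" "b \<in> carrier A" "c \<in> carrier B"
      "ba_le B (f a) c" "ba_le B c (f b)"
      unfolding hom_subord_def hom_subord_inv_def by blast
    then have "ba_le B (f a) (f b)" using B.le_trans[of "f a" c "f b"] by simp
    with p show "p \<in> ba_id A" unfolding ba_id_def by (simp add: map_le_iff)
  next
    fix p assume "p \<in> ba_id A"
    then obtain a b where p: "p = (a, b)" "a \<in> carrier A" "b \<in> carrier A" "ba_le A a b"
      unfolding ba_id_def by blast
    then have "(a, f a) \<in> hom_subord A B f" "(f a, b) \<in> hom_subord_inv A B f"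
      unfolding hom_subord_def hom_subord_inv_def by (auto simp: map_mono)
    with p show "p \<in> hom_subord A B f O hom_subord_inv A B f" by blast
  qed
  show "hom_subord_inv A B f O hom_subord A B f = ba_id B"
  proof (intro set_eqI iffI)
    fix p assume "p \<in> hom_subord_inv A B f O hom_subord A B f"
    then obtain c a d where p: "p = (c, d)" "c \<in> carrier B" "d \<in> carrier B" "a \<in> carrier A"
      "ba_le B c (f a)" "ba_le B (f a) d"
      unfolding hom_subord_def hom_subord_inv_def by blast
    then show "p \<in> ba_id B" unfolding ba_id_def using B.le_trans[of c "f a" d] by simp
  next
    fix p assume "p \<in> ba_id B"
    then obtain c d where p: "p = (c, d)" "c \<in> carrier B" "d \<in> carrier B" "ba_le B c d"
      unfolding ba_id_def by blast
    then obtain a where "a \<in> carrier A" "c = f a" using onto by blast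
    with p show "p \<in> hom_subord_inv A B f O hom_subord A B f"
      unfolding hom_subord_def hom_subord_inv_def by auto
  qed
qed

end

context bool_alg
begin

lemma ba_isomorphism_stone_map: "ba_isomorphism A (Clop (Ult A)) (stone_map A)"
proof -
  interpret C: bool_alg "Clop (Ult A)" by (rule bool_alg_Clop)
  show ?thesis
    by unfold_locales
      (simp_all add: carrier_Clop_Ult stone_map_zero stone_map_one stone_map_join stone_map_meet
        topspace_Ult stone_map_subset_iff)
qed

lemma eps_rel_eq_hom_subord: "eps_rel A = hom_subord A (Clop (Ult A)) (stone_map A)"
  unfolding eps_rel_def hom_subord_def by simp

end

theorem subord_iso_eps_rel: "is_ba A \<Longrightarrow> subord_iso A (Clop (Ult A)) (eps_rel A)"
  by (simp add: bool_alg.eps_rel_eq_hom_subord bool_alg.intro ba_isomorphism.subord_iso_hom_subord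
      bool_alg.ba_isomorphism_stone_map)

theorem eps_rel_natural:
  assumes A: "is_ba A" and B: "is_ba B" and S: "subordination A B S"
  shows "eps_rel A O Clop_rel (Ult A) (Ult B) (Ult_rel A B S) = S O eps_rel B"
proof -
  interpret A: bool_alg A by (rule bool_alg.intro) fact
  interpret B: bool_alg B by (rule bool_alg.intro) fact
  note S_ax = subordinationD[OF S]
  have "(a, V) \<in> eps_rel A O Clop_rel (Ult A) (Ult B) (Ult_rel A B S) \<longleftrightarrow> (a, V) \<in> S O eps_rel B"
    if a: "a \<in> carrier A" and c: "c \<in> carrier B" and V: "V = stone_map B c" for a c V
  proof -
    have "(a, V) \<in> eps_rel A O Clop_rel (Ult A) (Ult B) (Ult_rel A B S)
        \<longleftrightarrow> Ult_rel A B S `` stone_map A a \<subseteq> stone_map B c"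
      using a c V A.stone_map_subset_iff
      unfolding eps_rel_def Clop_rel_def A.carrier_Clop_Ult B.carrier_Clop_Ult
      by (auto 4 3 intro!: relcompI[of a "stone_map A a"] dest: Image_mono)
    also have "\<dots> \<longleftrightarrow> (a, c) \<in> S" by (rule Ult_rel_Image_stone_map_subset_iff[OF A B S a c])
    also have "\<dots> \<longleftrightarrow> (a, V) \<in> S O eps_rel B"
      using a c V S_ax(1) S_ax(6)[of a a _ c] B.stone_map_subset_iff
      unfolding eps_rel_def B.carrier_Clop_Ult by (auto 4 3 intro!: relcompI[of a c])
    finally show ?thesis .
  qed
  moreover have "fst p \<in> carrier A \<and> (\<exists>c\<in>carrier B. snd p = stone_map B c)"
    if "p \<in> eps_rel A O Clop_rel (Ult A) (Ult B) (Ult_rel A B S) \<or> p \<in> S O eps_rel B" for p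
    using that S_ax(1) unfolding eps_rel_def Clop_rel_def B.carrier_Clop_Ult by auto
  ultimately show ?thesis by (metis prod.collapse subsetI subset_antisym)
qed

theorem corollary2p6:
  shows
  "\<comment> \<open>Clop is a functor Stone^R \<rightarrow> BA^S\<close>
   (\<forall>X :: 'x topology. stone_space X \<longrightarrow> is_ba (Clop X)) \<and>
   (\<forall>(X :: 'x topology) (Y :: 'y topology) R. stone_space X \<longrightarrow> stone_space Y \<longrightarrow>
      closed_rel X Y R \<longrightarrow> subordination (Clop X) (Clop Y) (Clop_rel X Y R)) \<and>
   (\<forall>X :: 'x topology. stone_space X \<longrightarrow> Clop_rel X X (stone_id X) = ba_id (Clop X)) \<and>
   (\<forall>(X :: 'x topology) (Y :: 'y topology) (Z :: 'z topology) R R'.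
      stone_space X \<longrightarrow> stone_space Y \<longrightarrow> stone_space Z \<longrightarrow>
      closed_rel X Y R \<longrightarrow> closed_rel Y Z R' \<longrightarrow>
      Clop_rel X Z (R O R') = Clop_rel X Y R O Clop_rel Y Z R') \<and>
   \<comment> \<open>Ult is a functor BA^S \<rightarrow> Stone^R\<close>
   (\<forall>A :: 'a ba. is_ba A \<longrightarrow> stone_space (Ult A)) \<and>
   (\<forall>(A :: 'a ba) (B :: 'b ba) S. is_ba A \<longrightarrow> is_ba B \<longrightarrow>
      subordination A B S \<longrightarrow> closed_rel (Ult A) (Ult B) (Ult_rel A B S)) \<and>
   (\<forall>A :: 'a ba. is_ba A \<longrightarrow> Ult_rel A A (ba_id A) = stone_id (Ult A)) \<and>
   (\<forall>(A :: 'a ba) (B :: 'b ba) (C :: 'c ba) S S'.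
      is_ba A \<longrightarrow> is_ba B \<longrightarrow> is_ba C \<longrightarrow>
      subordination A B S \<longrightarrow> subordination B C S' \<longrightarrow>
      Ult_rel A C (S O S') = Ult_rel A B S O Ult_rel B C S') \<and>
   \<comment> \<open>natural isomorphism Id \<cong> Ult \<circ> Clop on Stone^R\<close>
   (\<forall>X :: 'x topology. stone_space X \<longrightarrow> stone_iso X (Ult (Clop X)) (eta_rel X)) \<and>
   (\<forall>(X :: 'x topology) (Y :: 'y topology) R. stone_space X \<longrightarrow> stone_space Y \<longrightarrow>
      closed_rel X Y R \<longrightarrow>
      eta_rel X O Ult_rel (Clop X) (Clop Y) (Clop_rel X Y R) = R O eta_rel Y) \<and>
   \<comment> \<open>natural isomorphism Id \<cong> Clop \<circ> Ult on BA^S\<close>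
   (\<forall>A :: 'a ba. is_ba A \<longrightarrow> subord_iso A (Clop (Ult A)) (eps_rel A)) \<and>
   (\<forall>(A :: 'a ba) (B :: 'b ba) S. is_ba A \<longrightarrow> is_ba B \<longrightarrow>
      subordination A B S \<longrightarrow>
      eps_rel A O Clop_rel (Ult A) (Ult B) (Ult_rel A B S) = S O eps_rel B)"
  by (intro conjI allI impI)
    (simp_all add: is_ba_Clop subordination_Clop_rel Clop_rel_id Clop_rel_comp stone_space_def
      bool_alg.stone_space_Ult[OF bool_alg.intro, unfolded stone_space_def]
      closed_rel_Ult_rel Ult_rel_ba_id Ult_rel_comp
      stone_iso_eta_rel eta_rel_natural subord_iso_eps_rel eps_rel_natural)

end
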